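(* Let $G$ be an oriented graph and $a,b$ positive integers. If $G$ admits a homomorphism to some consistent sub-orientation of the Kneser graph $KG_{a,b}$, then for every positive integer $c$ there exists a consistent sub-orientation $\overrightarrow{KG}_{ac,bc}$ of $KG_{ac,bc}$ such that $G$ admits a homomorphism to $\overrightarrow{KG}_{ac,bc}$.
   Context: An oriented graph is a finite directed graph with no directed cycle of length 1 or 2. A homomorphism of an oriented graph $G$ to an oriented graph $H$ is a map $f:V(G)\to V(H)$ such that $f(x)f(y)$ is an arc of $H$ whenever $xy$ is an arc of $G$. The Kneser graph $KG_{a,b}$ has the $b$-subsets of an $a$-set as vertices, two being adjacent iff they are disjoint. A consistent sub-orientation of $KG_{a,b}$ is an oriented graph whose underlying graph is a subgraph of $KG_{a,b}$ and such that for any two arcs $xy$ and $wz$, $x\cap z\neq\emptyset$ implies $y\cap w=\emptyset$. *)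

theory Defs
  imports Main
begin

definition oriented_graph :: "'v set \<Rightarrow> ('v \<times> 'v) set \<Rightarrow> bool" where
  "oriented_graph V A \<longleftrightarrow> finite V \<and> A \<subseteq> V \<times> V \<and>
     (\<forall>x. (x, x) \<notin> A) \<and> (\<forall>x y. (x, y) \<in> A \<longrightarrow> (y, x) \<notin> A)"

definition oriented_hom ::
  "'v set \<Rightarrow> ('v \<times> 'v) set \<Rightarrow> 'w set \<Rightarrow> ('w \<times> 'w) set \<Rightarrow> ('v \<Rightarrow> 'w) \<Rightarrow> bool" where
  "oriented_hom V A W B f \<longleftrightarrow> f ` V \<subseteq> W \<and> (\<forall>x y. (x, y) \<in> A \<longrightarrow> (f x, f y) \<in> B)"

definition kneser_vertices :: "nat \<Rightarrow> nat \<Rightarrow> nat set set" where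
  "kneser_vertices a b = {S. S \<subseteq> {0..<a} \<and> card S = b}"

definition kneser_adj :: "nat set \<Rightarrow> nat set \<Rightarrow> bool" where
  "kneser_adj S T \<longleftrightarrow> S \<inter> T = {}"

definition consistent_sub_orientation ::
  "nat \<Rightarrow> nat \<Rightarrow> nat set set \<Rightarrow> (nat set \<times> nat set) set \<Rightarrow> bool" where
  "consistent_sub_orientation a b W B \<longleftrightarrow>
     oriented_graph W B \<and> W \<subseteq> kneser_vertices a b \<and>
     (\<forall>x y. (x, y) \<in> B \<longrightarrow> kneser_adj x y) \<and>
     (\<forall>x y w z. (x, y) \<in> B \<longrightarrow> (w, z) \<in> B \<longrightarrow> x \<inter> z \<noteq> {} \<longrightarrow> y \<inter> w = {})"

end

theory Submission
  imports Defs
begin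

text \<open>Replace every ground element \<open>i\<close> of \<open>KG\<^sub>a\<^sub>,\<^sub>b\<close> by the block \<open>{i c, \<dots>, i c + c - 1}\<close>.
  This blow-up sends \<open>b\<close>-subsets of \<open>{0..<a}\<close> injectively to \<open>b c\<close>-subsets of \<open>{0..<a c}\<close>
  and two sets meet iff their blow-ups meet. Hence the image of a consistent
  sub-orientation of \<open>KG\<^sub>a\<^sub>,\<^sub>b\<close> is a consistent sub-orientation of \<open>KG\<^sub>a\<^sub>c\<^sub>,\<^sub>b\<^sub>c\<close>, and
  composing a homomorphism with the blow-up gives the required one.\<close>

definition blow_up :: "nat \<Rightarrow> nat set \<Rightarrow> nat set" where
  "blow_up c S = {j. j div c \<in> S}"

lemma mult_mem_blow_up_iff: "0 < c \<Longrightarrow> i * c \<in> blow_up c S \<longleftrightarrow> i \<in> S"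
  by (simp add: blow_up_def)

lemma inj_blow_up: "0 < c \<Longrightarrow> inj (blow_up c)"
  by (rule injI) (metis mult_mem_blow_up_iff set_eqI)

lemma blow_up_Int: "blow_up c S \<inter> blow_up c T = blow_up c (S \<inter> T)"
  by (auto simp: blow_up_def)

lemma blow_up_eq_empty_iff: "0 < c \<Longrightarrow> blow_up c S = {} \<longleftrightarrow> S = {}"
  by (auto simp: blow_up_def dest: mult_mem_blow_up_iff[THEN iffD2])

lemma blow_up_disjoint_iff: "0 < c \<Longrightarrow> blow_up c S \<inter> blow_up c T = {} \<longleftrightarrow> S \<inter> T = {}"
  by (simp add: blow_up_Int blow_up_eq_empty_iff)

lemma blow_up_eq_image: "0 < c \<Longrightarrow> blow_up c S = (\<lambda>(i, k). i * c + k) ` (S \<times> {0..<c})"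
proof (intro set_eqI iffI)
  fix j assume "0 < c" and "j \<in> blow_up c S"
  then show "j \<in> (\<lambda>(i, k). i * c + k) ` (S \<times> {0..<c})"
    by (intro image_eqI[of _ _ "(j div c, j mod c)"]) (auto simp: blow_up_def)
qed (auto simp: blow_up_def)

lemma card_blow_up:
  assumes "0 < c" and "finite S"
  shows "card (blow_up c S) = card S * c"
proof -
  have "inj_on (\<lambda>(i, k). i * c + k) (S \<times> {0..<c})"
  proof (rule inj_onI, clarsimp)
    fix i k i' k' assume "k < c" "k' < c" "i * c + k = i' * c + k'"
    then have "(i * c + k) div c = (i' * c + k') div c" "(i * c + k) mod c = (i' * c + k') mod c"
      by simp_all
    with \<open>k < c\<close> \<open>k' < c\<close> show "i = i' \<and> k = k'" by simp
  qed
  then show ?thesis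
    using assms by (simp add: blow_up_eq_image card_image card_cartesian_product)
qed

lemma blow_up_subset_atLeastLessThan:
  "0 < c \<Longrightarrow> S \<subseteq> {0..<a} \<Longrightarrow> blow_up c S \<subseteq> {0..<a * c}"
  by (auto simp: blow_up_def div_less_iff_less_mult)

lemma blow_up_kneser_vertices:
  assumes "0 < c" and "S \<in> kneser_vertices a b"
  shows "blow_up c S \<in> kneser_vertices (a * c) (b * c)"
proof -
  have "S \<subseteq> {0..<a}" and "card S = b"
    using assms(2) by (auto simp: kneser_vertices_def)
  moreover have "finite S"
    using \<open>S \<subseteq> {0..<a}\<close> finite_subset by blast
  ultimately show ?thesis
    using assms(1) by (simp add: kneser_vertices_def card_blow_up blow_up_subset_atLeastLessThan)
qed

lemma oriented_graph_inj_image: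
  assumes "oriented_graph W B" and "inj_on g W"
  shows "oriented_graph (g ` W) (map_prod g g ` B)"
proof -
  have "\<And>x y. (x, y) \<in> B \<Longrightarrow> x \<in> W \<and> y \<in> W"
    using assms(1) by (auto simp: oriented_graph_def)
  then show ?thesis
    using assms unfolding oriented_graph_def by (auto simp: inj_on_eq_iff)
qed

lemma oriented_hom_image: "oriented_hom W B (g ` W) (map_prod g g ` B) g"
  by (auto simp: oriented_hom_def)

lemma oriented_hom_comp:
  "oriented_hom V A W B f \<Longrightarrow> oriented_hom W B U C g \<Longrightarrow> oriented_hom V A U C (g \<circ> f)"
  by (simp add: oriented_hom_def image_subset_iff)

lemma consistent_sub_orientation_blow_up:
  assumes "0 < c" and "consistent_sub_orientation a b W B"
  shows "consistent_sub_orientation (a * c) (b * c)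
           (blow_up c ` W) (map_prod (blow_up c) (blow_up c) ` B)"
proof -
  let ?g = "blow_up c"
  have "oriented_graph W B" and "W \<subseteq> kneser_vertices a b"
    and disjoint: "\<And>x y. (x, y) \<in> B \<Longrightarrow> x \<inter> y = {}"
    and consistent: "\<And>x y w z. (x, y) \<in> B \<Longrightarrow> (w, z) \<in> B \<Longrightarrow> x \<inter> z \<noteq> {} \<Longrightarrow> y \<inter> w = {}"
    using assms(2) unfolding consistent_sub_orientation_def kneser_adj_def by blast+
  have "oriented_graph (?g ` W) (map_prod ?g ?g ` B)"
    using \<open>oriented_graph W B\<close> inj_blow_up[OF assms(1)]
    by (auto intro: oriented_graph_inj_image inj_on_subset)
  moreover have "?g ` W \<subseteq> kneser_vertices (a * c) (b * c)"
    using \<open>W \<subseteq> kneser_vertices a b\<close> blow_up_kneser_vertices[OF assms(1)] by blast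
  moreover have "\<forall>x y. (x, y) \<in> map_prod ?g ?g ` B \<longrightarrow> x \<inter> y = {}"
    by (clarsimp simp: disjoint blow_up_disjoint_iff[OF assms(1)])
  moreover have "\<forall>x y w z. (x, y) \<in> map_prod ?g ?g ` B \<longrightarrow> (w, z) \<in> map_prod ?g ?g ` B \<longrightarrow>
      x \<inter> z \<noteq> {} \<longrightarrow> y \<inter> w = {}"
    using consistent by (clarsimp simp: blow_up_disjoint_iff[OF assms(1)])
  ultimately show ?thesis
    unfolding consistent_sub_orientation_def kneser_adj_def by blast
qed

theorem theorem2:
  fixes V :: "'v set" and A :: "('v \<times> 'v) set" and a b :: nat
  assumes "oriented_graph V A" and "0 < a" and "0 < b"
    and "\<exists>W B f. consistent_sub_orientation a b W B \<and> oriented_hom V A W B f"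
  shows "\<forall>c::nat. 0 < c \<longrightarrow>
           (\<exists>W B f. consistent_sub_orientation (a * c) (b * c) W B \<and> oriented_hom V A W B f)"
proof (intro allI impI)
  fix c :: nat assume "0 < c"
  obtain W B f where "consistent_sub_orientation a b W B" and "oriented_hom V A W B f"
    using assms(4) by blast
  then show "\<exists>W B f. consistent_sub_orientation (a * c) (b * c) W B \<and> oriented_hom V A W B f"
    using consistent_sub_orientation_blow_up[OF \<open>0 < c\<close>]
      oriented_hom_comp[OF _ oriented_hom_image] by blast
qed

end
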